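(* Let $t$ be an indeterminate, let $\mathbf K$ be an infinite subset of $\mathbb C\setminus\{0,1\}$, and let $\mathbb F$ be a subring of $\mathbb C(t)$ with $$\mathbb C[t,t^{-1}]\subseteq \mathbb F\subseteq\{f/g : f,g\in\mathbb C[t],\ g(1)\neq 0,\ g(\lambda)\neq0\ \forall \lambda\in\mathbf K\}.$$ Let $A$ be the $\mathbb F$-algebra generated by $x_1,\dots,x_n$ subject to finitely many relations, each an $\mathbb F$-linear combination of monomials in the $x_j$. Assume $t-1$ is a nonzero, nonunit, non-zero-divisor of $A$ and that $A_1:=A/(t-1)A$ is commutative; let $\gamma_1:A\to A_1$ be the canonical map, and regard $A_1$ as a Poisson algebra with bracket $\{\gamma_1(a),\gamma_1(b)\}=\gamma_1((t-1)^{-1}(ab-ba))$. For $\lambda\in\mathbf K$ let $A_\lambda$ be the $\mathbb C$-algebra generated by $x_1,\dots,x_n$ subject to the same relations with all coefficients evaluated at $t=\lambda$, and let $\gamma_\lambda:A\to A_\lambda$ be the $\mathbb C$-algebra map with $t\mapsto\lambda$, $x_j\mapsto x_j$. Let $\widehat A=\prod_{\lambda\in\mathbf K}A_\lambda$ and $\gamma:A\to\widehat A$, $\gamma(a)=(\gamma_\lambda(a))_{\lambda}$. Assume there is an $\mathbb F$-basis $\{\xi_i\}$ of $A$ whose images under $\gamma_1$ and under each $\gamma_\lambda$ ($\lambda\in\mathbf K$) are $\mathbb C$-bases of $A_1$ and $A_\lambda$ respectively. Then $\gamma$ is injective, and with $\Gamma=\gamma_1\gamma^{-1}:\gamma(A)\to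 A_1$, for every ideal $I$ of $\widehat A$ the set $\Gamma(I\cap\gamma(A))$ is a Poisson ideal of $A_1$.
   Context: A Poisson algebra is a commutative $\mathbb C$-algebra with a Lie bracket $\{-,-\}$ satisfying $\{ab,c\}=a\{b,c\}+\{a,c\}b$. An ideal $J$ of a Poisson algebra is a Poisson ideal if $\{J,A_1\}\subseteq J$. The injectivity of $\gamma$ (needed to define $\Gamma$) is established in the paper separately. *)

theory Defs
  imports "HOL-Computational_Algebra.Polynomial"
          "HOL-Computational_Algebra.Fraction_Field" "HOL-Algebra.QuotRing"
begin

type_synonym ratfun = "complex poly fract"

definition is_subring_set :: "ratfun set \<Rightarrow> bool" where
  "is_subring_set F \<longleftrightarrow> 0 \<in> F \<and> 1 \<in> F \<and>
     (\<forall>f\<in>F. \<forall>g\<in>F. f + g \<in> F \<and> f - g \<in> F \<and> f * g \<in> F)"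

definition laurent_polys :: "ratfun set" where
  "laurent_polys = {Fract p (monom 1 k) | p k. True}"

definition admissible :: "complex set \<Rightarrow> ratfun set" where
  "admissible K = {Fract p q | p q. poly q 1 \<noteq> 0 \<and> (\<forall>l\<in>K. poly q l \<noteq> 0)}"

definition evalF :: "complex \<Rightarrow> ratfun \<Rightarrow> complex" where
  "evalF l f = (SOME v. \<exists>p q. f = Fract p q \<and> poly q l \<noteq> 0 \<and> v = poly p l / poly q l)"

text \<open>Free (noncommutative) algebra on x_0,...,x_(n-1) with coefficients in S:
  finitely supported functions from words (lists of letters < n) to S,
  with concatenation-convolution product.\<close>
definition free_alg :: "'c::comm_ring_1 set \<Rightarrow> nat \<Rightarrow> (nat list \<Rightarrow> 'c) ring" where
  "free_alg S n =
    \<lparr>carrier = {f. finite {w. f w \<noteq> 0} \<and> (\<forall>w. f w \<in> S) \<and> (\<forall>w. f w \<noteq> 0 \<longrightarrow> set w \<subseteq> {..<n})},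
     mult = (\<lambda>f g w. \<Sum>i\<le>length w. f (take i w) * g (drop i w)),
     one = (\<lambda>w. if w = [] then 1 else 0),
     zero = (\<lambda>w. 0),
     add = (\<lambda>f g w. f w + g w)\<rparr>"

definition scal :: "'c::zero \<Rightarrow> nat list \<Rightarrow> 'c" where
  "scal c = (\<lambda>w. if w = [] then c else 0)"

definition relI :: "ratfun set \<Rightarrow> nat \<Rightarrow> (nat list \<Rightarrow> ratfun) set \<Rightarrow> (nat list \<Rightarrow> ratfun) set" where
  "relI F n R = genideal (free_alg F n) R"

definition algA :: "ratfun set \<Rightarrow> nat \<Rightarrow> (nat list \<Rightarrow> ratfun) set \<Rightarrow> (nat list \<Rightarrow> ratfun) set ring" where
  "algA F n R = free_alg F n Quot relI F n R"

definition scalA :: "ratfun set \<Rightarrow> nat \<Rightarrow> (nat list \<Rightarrow> ratfun) set \<Rightarrow> ratfun \<Rightarrow> (nat list \<Rightarrow> ratfun) set" where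
  "scalA F n R c = relI F n R +>\<^bsub>free_alg F n\<^esub> scal c"

definition tm1 :: "ratfun set \<Rightarrow> nat \<Rightarrow> (nat list \<Rightarrow> ratfun) set \<Rightarrow> (nat list \<Rightarrow> ratfun) set" where
  "tm1 F n R = scalA F n R (Fract [:-1, 1:] 1)"

definition tI :: "ratfun set \<Rightarrow> nat \<Rightarrow> (nat list \<Rightarrow> ratfun) set \<Rightarrow> (nat list \<Rightarrow> ratfun) set set" where
  "tI F n R = genideal (algA F n R) {tm1 F n R}"

definition algA1 where
  "algA1 F n R = algA F n R Quot tI F n R"

definition gamma1 where
  "gamma1 F n R a = tI F n R +>\<^bsub>algA F n R\<^esub> a"

definition pbracket where
  "pbracket F n R X Y = (SOME z. \<exists>a b c. a \<in> carrier (algA F n R) \<and> b \<in> carrier (algA F n R)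
      \<and> c \<in> carrier (algA F n R) \<and> gamma1 F n R a = X \<and> gamma1 F n R b = Y
      \<and> tm1 F n R \<otimes>\<^bsub>algA F n R\<^esub> c
          = a \<otimes>\<^bsub>algA F n R\<^esub> b \<ominus>\<^bsub>algA F n R\<^esub> b \<otimes>\<^bsub>algA F n R\<^esub> a
      \<and> z = gamma1 F n R c)"

definition poisson_ideal where
  "poisson_ideal F n R J \<longleftrightarrow> ideal J (algA1 F n R) \<and>
     (\<forall>X\<in>J. \<forall>Y\<in>carrier (algA1 F n R). pbracket F n R X Y \<in> J)"

definition evalw :: "complex \<Rightarrow> (nat list \<Rightarrow> ratfun) \<Rightarrow> nat list \<Rightarrow> complex" where
  "evalw l f = (\<lambda>w. evalF l (f w))"

definition relIl where
  "relIl n R l = genideal (free_alg (UNIV :: complex set) n) (evalw l ` R)"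

definition algAl where
  "algAl n R l = free_alg (UNIV :: complex set) n Quot relIl n R l"

definition scalAl where
  "scalAl n R l c = relIl n R l +>\<^bsub>free_alg (UNIV :: complex set) n\<^esub> scal c"

definition gammal where
  "gammal n R l a = relIl n R l +>\<^bsub>free_alg (UNIV :: complex set) n\<^esub> evalw l (SOME f. f \<in> a)"

definition prod_ring :: "'k set \<Rightarrow> ('k \<Rightarrow> ('a, 'm) ring_scheme) \<Rightarrow> ('k \<Rightarrow> 'a) ring" where
  "prod_ring K Rs =
    \<lparr>carrier = (\<Pi>\<^sub>E k\<in>K. carrier (Rs k)),
     mult = (\<lambda>f g. \<lambda>k\<in>K. f k \<otimes>\<^bsub>Rs k\<^esub> g k),
     one = (\<lambda>k\<in>K. \<one>\<^bsub>Rs k\<^esub>),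
     zero = (\<lambda>k\<in>K. \<zero>\<^bsub>Rs k\<^esub>),
     add = (\<lambda>f g. \<lambda>k\<in>K. f k \<oplus>\<^bsub>Rs k\<^esub> g k)\<rparr>"

definition Ahat where
  "Ahat K n R = prod_ring K (algAl n R)"

definition gammahat where
  "gammahat K n R a = (\<lambda>l\<in>K. gammal n R l a)"

definition is_basis :: "('a, 'm) ring_scheme \<Rightarrow> ('c::zero \<Rightarrow> 'a) \<Rightarrow> 'c set \<Rightarrow> 'i set \<Rightarrow> ('i \<Rightarrow> 'a) \<Rightarrow> bool" where
  "is_basis R sc S J xi \<longleftrightarrow> xi \<in> J \<rightarrow> carrier R \<and>
     (\<forall>x\<in>carrier R. \<exists>!c. c \<in> J \<rightarrow>\<^sub>E S \<and> finite {i\<in>J. c i \<noteq> 0} \<and>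
          x = finsum R (\<lambda>i. sc (c i) \<otimes>\<^bsub>R\<^esub> xi i) {i\<in>J. c i \<noteq> 0})"

end

theory Submission
  imports Defs "HOL-Algebra.UnivPoly"
begin

text \<open>An element of A is an F-combination of the basis xi, and gammal sends it to the
  combination of the basis of A_l whose coefficients are the original ones evaluated at l.
  If all gammal kill it, every coefficient is a rational function regular on K and vanishing
  on the infinite set K, hence zero; so gammahat is injective.

  For an ideal I of Ahat, let P be its preimage under gammahat. Then
  (gamma1 \<circ> inv gammahat)(I \<inter> gammahat A) = gamma1(P), and P is closed under division
  by t - 1 because gammahat(t - 1) = (l - 1)_l is a unit of Ahat. Given a \<in> P and b, any data
  t c = a' b - b a' with a' = a + t d defining the bracket of gamma1 a and gamma1 b can be
  corrected to u = c - (d b - b d), which satisfies t u = a b - b a \<in> P. Thus u \<in> P and,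
  as gamma1 kills commutators, the bracket equals gamma1 u \<in> gamma1(P).\<close>

subsection \<open>The free algebra on words\<close>

definition subring_set :: "'c::comm_ring_1 set \<Rightarrow> bool" where
  "subring_set S \<longleftrightarrow> 0 \<in> S \<and> 1 \<in> S \<and> (\<forall>x\<in>S. \<forall>y\<in>S. x + y \<in> S \<and> x - y \<in> S \<and> x * y \<in> S)"

lemma subring_set_UNIV: "subring_set UNIV"
  by (simp add: subring_set_def)

lemma is_subring_set_iff: "is_subring_set F \<longleftrightarrow> subring_set F"
  unfolding is_subring_set_def subring_set_def ..

lemma subring_set_uminus: "subring_set S \<Longrightarrow> x \<in> S \<Longrightarrow> - x \<in> S"
  unfolding subring_set_def by (metis diff_0)

lemma subring_set_sum:
  assumes "subring_set S" "\<And>i. i \<in> A \<Longrightarrow> f i \<in> S"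
  shows "sum f A \<in> S"
  using assms(2)
proof (induction A rule: infinite_finite_induct)
  case (insert x A)
  then show ?case using assms(1) by (simp add: subring_set_def)
qed (use assms(1) in \<open>auto simp: subring_set_def\<close>)

lemma free_alg_simps:
  "carrier (free_alg S n) =
     {f. finite {w. f w \<noteq> 0} \<and> (\<forall>w. f w \<in> S) \<and> (\<forall>w. f w \<noteq> 0 \<longrightarrow> set w \<subseteq> {..<n})}"
  "f \<otimes>\<^bsub>free_alg S n\<^esub> g = (\<lambda>w. \<Sum>i\<le>length w. f (take i w) * g (drop i w))"
  "f \<oplus>\<^bsub>free_alg S n\<^esub> g = (\<lambda>w. f w + g w)"
  "\<one>\<^bsub>free_alg S n\<^esub> = (\<lambda>w. if w = [] then 1 else 0)"
  "\<zero>\<^bsub>free_alg S n\<^esub> = (\<lambda>w. 0)"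
  by (simp_all add: free_alg_def)

text \<open>Both sides equal the sum of f u * g v * h x over all splittings w = u @ v @ x,
  indexed by the pair of cut points i \<le> k.\<close>
lemma word_conv_assoc:
  fixes f g h :: "nat list \<Rightarrow> 'c::comm_ring_1"
  shows "(\<Sum>k\<le>length w. (\<Sum>i\<le>length (take k w). f (take i (take k w)) * g (drop i (take k w))) * h (drop k w))
       = (\<Sum>i\<le>length w. f (take i w) * (\<Sum>j\<le>length (drop i w). g (take j (drop i w)) * h (drop j (drop i w))))"
proof -
  define G where "G i k = f (take i w) * g (take (k - i) (drop i w)) * h (drop k w)" for i k
  have lhs: "(\<Sum>i\<le>length (take k w). f (take i (take k w)) * g (drop i (take k w))) * h (drop k w)
      = (\<Sum>i\<le>length w. if i \<le> k then G i k else 0)" if k: "k \<le> length w" for k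
  proof -
    have "(\<Sum>i\<le>length (take k w). f (take i (take k w)) * g (drop i (take k w))) * h (drop k w)
        = (\<Sum>i\<le>k. G i k)"
      using k by (auto simp: G_def sum_distrib_right min_def take_drop intro!: sum.cong)
    also have "\<dots> = (\<Sum>i\<le>length w. if i \<le> k then G i k else 0)"
      using k by (simp add: sum.If_cases) (rule sum.cong; auto)
    finally show ?thesis .
  qed
  have rhs: "f (take i w) * (\<Sum>j\<le>length (drop i w). g (take j (drop i w)) * h (drop j (drop i w)))
      = (\<Sum>k\<le>length w. if i \<le> k then G i k else 0)" if i: "i \<le> length w" for i
  proof -
    have "f (take i w) * (\<Sum>j\<le>length (drop i w). g (take j (drop i w)) * h (drop j (drop i w)))
        = (\<Sum>j\<le>length w - i. G i (i + j))"
      by (simp add: G_def sum_distrib_left mult.assoc add.commute)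
    also have "\<dots> = (\<Sum>k\<in>{i..length w}. G i k)"
    proof -
      have "{i..length w} = (\<lambda>j. i + j) ` {..length w - i}"
        using i by (auto simp: image_iff) (metis atMost_iff diff_le_mono le_add_diff_inverse)
      then show ?thesis by (simp add: sum.reindex)
    qed
    also have "\<dots> = (\<Sum>k\<le>length w. if i \<le> k then G i k else 0)"
      by (simp add: sum.If_cases) (rule sum.cong; auto)
    finally show ?thesis .
  qed
  show ?thesis
    using lhs rhs by (simp add: sum.swap[of "\<lambda>k i. if i \<le> k then G i k else 0"])
qed

lemma word_conv_one_left:
  "(\<Sum>i\<le>length w. (if take i w = [] then 1 else 0) * f (drop i w)) = (f w :: 'c::comm_ring_1)"
  by (cases w) (simp_all add: sum.atMost_Suc_shift del: sum.atMost_Suc)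

lemma word_conv_one_right:
  "(\<Sum>i\<le>length w. f (take i w) * (if drop i w = [] then 1 else 0)) = (f w :: 'c::comm_ring_1)"
proof -
  have "(\<Sum>i\<le>length w. f (take i w) * (if drop i w = [] then 1 else 0)) = (\<Sum>i\<in>{length w}. f (take i w))"
    by (rule sum.mono_neutral_cong_right) auto
  then show ?thesis by simp
qed

lemma word_conv_nonzero:
  assumes "(\<Sum>i\<le>length w. f (take i w) * g (drop i w)) \<noteq> (0::'c::comm_ring_1)"
  obtains i where "f (take i w) \<noteq> 0" "g (drop i w) \<noteq> 0"
  using assms by (metis (no_types, lifting) mult_not_zero sum.neutral)

lemma free_alg_mult_closed:
  assumes S: "subring_set S" and f: "f \<in> carrier (free_alg S n)" and g: "g \<in> carrier (free_alg S n)"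
  shows "f \<otimes>\<^bsub>free_alg S n\<^esub> g \<in> carrier (free_alg S n)"
proof -
  let ?h = "\<lambda>w. \<Sum>i\<le>length w. f (take i w) * g (drop i w)"
  have "{w. ?h w \<noteq> 0} \<subseteq> (\<lambda>(u, v). u @ v) ` ({u. f u \<noteq> 0} \<times> {v. g v \<noteq> 0})"
  proof
    fix w assume "w \<in> {w. ?h w \<noteq> 0}"
    then obtain i where "f (take i w) \<noteq> 0" "g (drop i w) \<noteq> 0"
      by (auto elim: word_conv_nonzero)
    then show "w \<in> (\<lambda>(u, v). u @ v) ` ({u. f u \<noteq> 0} \<times> {v. g v \<noteq> 0})"
      by (auto intro!: image_eqI[of _ _ "(take i w, drop i w)"])
  qed
  moreover have "finite ({u. f u \<noteq> 0} \<times> {v. g v \<noteq> 0})"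
    using f g by (simp add: free_alg_simps)
  ultimately have "finite {w. ?h w \<noteq> 0}"
    by (meson finite_imageI finite_subset)
  moreover have "?h w \<in> S" for w
    using f g S by (intro subring_set_sum) (auto simp: free_alg_simps subring_set_def)
  moreover have "set w \<subseteq> {..<n}" if hw: "?h w \<noteq> 0" for w
  proof -
    obtain i where "f (take i w) \<noteq> 0" "g (drop i w) \<noteq> 0"
      using hw by (rule word_conv_nonzero)
    then have "set (take i w) \<subseteq> {..<n}" "set (drop i w) \<subseteq> {..<n}"
      using f g by (auto simp: free_alg_simps)
    then show ?thesis by (metis append_take_drop_id le_sup_iff set_append)
  qed
  ultimately show ?thesis by (simp add: free_alg_simps)
qed

lemma free_alg_ring:
  assumes S: "subring_set S"
  shows "ring (free_alg S n)"
proof (rule ringI)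
  show "abelian_group (free_alg S n)"
  proof (rule abelian_groupI)
    fix x y assume "x \<in> carrier (free_alg S n)" "y \<in> carrier (free_alg S n)"
    then show "x \<oplus>\<^bsub>free_alg S n\<^esub> y \<in> carrier (free_alg S n)"
      using S unfolding free_alg_simps subring_set_def
      by (auto intro: finite_subset[of _ "{w. x w \<noteq> 0} \<union> {w. y w \<noteq> 0}"])
        (metis add.left_neutral add.right_neutral lessThan_iff subsetD)
  next
    fix x assume x: "x \<in> carrier (free_alg S n)"
    show "\<exists>y\<in>carrier (free_alg S n). y \<oplus>\<^bsub>free_alg S n\<^esub> x = \<zero>\<^bsub>free_alg S n\<^esub>"
      by (rule bexI[of _ "\<lambda>w. - x w"]) (use x S subring_set_uminus in \<open>auto simp: free_alg_simps\<close>)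
  qed (use S in \<open>simp_all add: free_alg_simps subring_set_def algebra_simps\<close>)
next
  show "monoid (free_alg S n)"
  proof (rule monoidI)
    have "{w. (if w = [] then 1 else 0::'a) \<noteq> 0} \<subseteq> {[]}" by auto
    then show "\<one>\<^bsub>free_alg S n\<^esub> \<in> carrier (free_alg S n)"
      using S by (auto simp: free_alg_simps subring_set_def intro: finite_subset)
  next
    fix x y assume "x \<in> carrier (free_alg S n)" "y \<in> carrier (free_alg S n)"
    then show "x \<otimes>\<^bsub>free_alg S n\<^esub> y \<in> carrier (free_alg S n)"
      by (rule free_alg_mult_closed[OF S])
  next
    fix x y z
    show "x \<otimes>\<^bsub>free_alg S n\<^esub> y \<otimes>\<^bsub>free_alg S n\<^esub> z = x \<otimes>\<^bsub>free_alg S n\<^esub> (y \<otimes>\<^bsub>free_alg S n\<^esub> z)"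
      unfolding free_alg_simps by (rule ext) (rule word_conv_assoc)
  qed (simp_all only: free_alg_simps word_conv_one_left word_conv_one_right)
qed (simp_all add: free_alg_simps algebra_simps sum.distrib)

lemma scal_mult_left: "scal c \<otimes>\<^bsub>free_alg S n\<^esub> f = (\<lambda>w. c * f w)"
proof
  fix w
  have "(\<Sum>i\<le>length w. scal c (take i w) * f (drop i w))
      = c * (\<Sum>i\<le>length w. (if take i w = [] then 1 else 0) * f (drop i w))"
    by (simp add: sum_distrib_left scal_def) (rule sum.cong; simp)
  then show "(scal c \<otimes>\<^bsub>free_alg S n\<^esub> f) w = c * f w"
    by (simp only: free_alg_simps word_conv_one_left)
qed

lemma scal_mult_right: "f \<otimes>\<^bsub>free_alg S n\<^esub> scal c = (\<lambda>w. c * f w)"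
proof
  fix w
  have "(\<Sum>i\<le>length w. f (take i w) * scal c (drop i w))
      = c * (\<Sum>i\<le>length w. f (take i w) * (if drop i w = [] then 1 else 0))"
    by (simp add: sum_distrib_left scal_def) (rule sum.cong; simp)
  then show "(f \<otimes>\<^bsub>free_alg S n\<^esub> scal c) w = c * f w"
    by (simp only: free_alg_simps word_conv_one_right)
qed

lemma scal_central: "scal c \<otimes>\<^bsub>free_alg S n\<^esub> f = f \<otimes>\<^bsub>free_alg S n\<^esub> scal c"
  by (simp add: scal_mult_left scal_mult_right)

lemma scal_mult: "scal c \<otimes>\<^bsub>free_alg S n\<^esub> scal d = scal (c * d)"
  unfolding scal_mult_left by (auto simp: scal_def)

lemma scal_one: "scal 1 = \<one>\<^bsub>free_alg S n\<^esub>"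
  by (simp add: free_alg_simps scal_def)

lemma scal_zero: "scal 0 = \<zero>\<^bsub>free_alg S n\<^esub>"
  by (simp add: free_alg_simps scal_def fun_eq_iff)

lemma scal_closed: "subring_set S \<Longrightarrow> c \<in> S \<Longrightarrow> scal c \<in> carrier (free_alg S n)"
  by (auto simp: free_alg_simps scal_def subring_set_def intro: finite_subset[of _ "{[]}"])

subsection \<open>Evaluating rational functions\<close>

definition regular_at :: "complex \<Rightarrow> ratfun \<Rightarrow> bool" where
  "regular_at l f \<longleftrightarrow> (\<exists>p q. f = Fract p q \<and> poly q l \<noteq> 0)"

lemma evalF_Fract:
  assumes "poly q l \<noteq> 0"
  shows "evalF l (Fract p q) = poly p l / poly q l"
proof -
  have ex: "\<exists>v p' q'. Fract p q = Fract p' q' \<and> poly q' l \<noteq> 0 \<and> v = poly p' l / poly q' l"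
    using assms by blast
  have unique: "v = poly p l / poly q l"
    if "\<exists>p' q'. Fract p q = Fract p' q' \<and> poly q' l \<noteq> 0 \<and> v = poly p' l / poly q' l" for v
  proof -
    from that obtain p' q' where h: "Fract p q = Fract p' q'" "poly q' l \<noteq> 0" "v = poly p' l / poly q' l"
      by blast
    have "q \<noteq> 0" "q' \<noteq> 0" using assms h(2) by auto
    then have "p * q' = p' * q" using h(1) eq_fract(1) by blast
    then have "poly p l * poly q' l = poly p' l * poly q l" by (metis poly_mult)
    then show ?thesis using h(2,3) assms by (simp add: frac_eq_eq)
  qed
  show ?thesis
    unfolding evalF_def using someI_ex[OF ex] unique by blast
qed

lemma regular_at_Fract: "poly q l \<noteq> 0 \<Longrightarrow> regular_at l (Fract p q)"
  unfolding regular_at_def by blast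

lemma evalF_const: "regular_at l (Fract p 1) \<and> evalF l (Fract p 1) = poly p l"
  by (simp add: regular_at_Fract evalF_Fract)

lemma regular_at_0: "regular_at l 0 \<and> evalF l 0 = 0"
  using evalF_const[of l 0] by (simp add: Zero_fract_def)

lemma regular_at_1: "regular_at l 1 \<and> evalF l 1 = 1"
  using evalF_const[of l 1] by (simp add: One_fract_def)

lemma regular_at_add:
  assumes "regular_at l f" "regular_at l g"
  shows "regular_at l (f + g) \<and> evalF l (f + g) = evalF l f + evalF l g"
proof -
  obtain p q p' q' where f: "f = Fract p q" "poly q l \<noteq> 0" and g: "g = Fract p' q'" "poly q' l \<noteq> 0"
    using assms unfolding regular_at_def by blast
  have "q \<noteq> 0" "q' \<noteq> 0" using f g by auto
  then have sum: "f + g = Fract (p * q' + p' * q) (q * q')" using f g by simp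
  have "poly (q * q') l \<noteq> 0" using f g by simp
  then show ?thesis
    unfolding sum using f g by (simp add: regular_at_Fract evalF_Fract add_frac_eq)
qed

lemma regular_at_mult:
  assumes "regular_at l f" "regular_at l g"
  shows "regular_at l (f * g) \<and> evalF l (f * g) = evalF l f * evalF l g"
proof -
  obtain p q p' q' where f: "f = Fract p q" "poly q l \<noteq> 0" and g: "g = Fract p' q'" "poly q' l \<noteq> 0"
    using assms unfolding regular_at_def by blast
  then have prod: "f * g = Fract (p * p') (q * q')" by simp
  have "poly (q * q') l \<noteq> 0" using f g by simp
  then show ?thesis
    unfolding prod using f g by (simp add: regular_at_Fract evalF_Fract)
qed

lemma regular_at_sum:
  "(\<And>i. i \<in> A \<Longrightarrow> regular_at l (h i)) \<Longrightarrow>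
     regular_at l (sum h A) \<and> evalF l (sum h A) = (\<Sum>i\<in>A. evalF l (h i))"
proof (induction A rule: infinite_finite_induct)
  case (insert x A)
  then show ?case using regular_at_add[of l "h x" "sum h A"] by simp
qed (simp_all add: regular_at_0)

lemma admissible_regular_at: "f \<in> admissible K \<Longrightarrow> l \<in> K \<Longrightarrow> regular_at l f"
  unfolding admissible_def regular_at_def by blast

lemma admissible_eq_0_if_evalF_eq_0:
  assumes "infinite K" "f \<in> admissible K" "\<And>l. l \<in> K \<Longrightarrow> evalF l f = 0"
  shows "f = 0"
proof -
  obtain p q where f: "f = Fract p q" and q: "\<forall>l\<in>K. poly q l \<noteq> 0"
    using assms(2) unfolding admissible_def by blast
  have "K \<subseteq> {x. poly p x = 0}"
    using assms(3) q by (auto simp: f evalF_Fract)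
  have "p = 0"
  proof (rule ccontr)
    assume "p \<noteq> 0"
    then have "finite {x. poly p x = 0}" by (rule poly_roots_finite)
    with \<open>K \<subseteq> {x. poly p x = 0}\<close> assms(1) show False by (metis finite_subset)
  qed
  then show ?thesis by (simp add: f Zero_fract_def eq_fract(3))
qed

subsection \<open>Coefficientwise evaluation\<close>

lemma evalw_closed:
  assumes "S \<subseteq> {f. regular_at l f}" "f \<in> carrier (free_alg S n)"
  shows "evalw l f \<in> carrier (free_alg UNIV n)"
proof -
  have "evalw l f w \<noteq> 0 \<Longrightarrow> f w \<noteq> 0" for w
    using regular_at_0 by (auto simp: evalw_def)
  then show ?thesis
    using assms by (auto simp: free_alg_simps intro: finite_subset[of _ "{w. f w \<noteq> 0}"])
qed

lemma evalw_ring_hom: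
  assumes S: "S \<subseteq> {f. regular_at l f}"
  shows "evalw l \<in> ring_hom (free_alg S n) (free_alg UNIV n)"
proof (rule ring_hom_memI)
  fix x assume "x \<in> carrier (free_alg S n)"
  then show "evalw l x \<in> carrier (free_alg UNIV n)" by (rule evalw_closed[OF S])
next
  fix x y assume x: "x \<in> carrier (free_alg S n)" and y: "y \<in> carrier (free_alg S n)"
  have reg: "regular_at l (x u)" "regular_at l (y v)" for u v
    using x y S by (auto simp: free_alg_simps)
  have "evalF l (\<Sum>i\<le>length w. x (take i w) * y (drop i w))
      = (\<Sum>i\<le>length w. evalF l (x (take i w)) * evalF l (y (drop i w)))" for w
    using regular_at_sum[of "{..length w}" l] regular_at_mult reg by simp
  then show "evalw l (x \<otimes>\<^bsub>free_alg S n\<^esub> y) = evalw l x \<otimes>\<^bsub>free_alg UNIV n\<^esub> evalw l y"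
    by (simp add: free_alg_simps evalw_def)
  show "evalw l (x \<oplus>\<^bsub>free_alg S n\<^esub> y) = evalw l x \<oplus>\<^bsub>free_alg UNIV n\<^esub> evalw l y"
    using regular_at_add reg by (simp add: free_alg_simps evalw_def)
next
  show "evalw l \<one>\<^bsub>free_alg S n\<^esub> = \<one>\<^bsub>free_alg UNIV n\<^esub>"
    by (simp add: free_alg_simps evalw_def fun_eq_iff regular_at_0 regular_at_1)
qed

lemma evalw_scal: "evalw l (scal c) = scal (evalF l c)"
  by (auto simp: evalw_def scal_def regular_at_0)

subsection \<open>Quotient rings, ideals and bases\<close>

lemma FactRing_carrier_obtain:
  assumes "X \<in> carrier (R Quot I)"
  obtains x where "x \<in> carrier R" "X = I +>\<^bsub>R\<^esub> x"
  using assms unfolding FactRing_def A_RCOSETS_def' by auto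

lemma rcos_mem_FactRing_carrier: "x \<in> carrier R \<Longrightarrow> I +>\<^bsub>R\<^esub> x \<in> carrier (R Quot I)"
  unfolding FactRing_def A_RCOSETS_def' by auto

lemma (in ideal) rcos_eq_iff_minus_mem:
  assumes "x \<in> carrier R" "y \<in> carrier R"
  shows "I +> x = I +> y \<longleftrightarrow> x \<ominus> y \<in> I"
proof -
  have "I +> x = I +> y \<longleftrightarrow> x \<in> I +> y"
    using a_repr_independence'[of x y] a_repr_independenceD[of x y] assms by auto
  also have "\<dots> \<longleftrightarrow> x \<ominus> y \<in> I"
    using a_rcos_module_minus[OF ring_axioms] assms by blast
  finally show ?thesis .
qed

lemma (in ideal) rcos_eq_zero_iff:
  assumes "x \<in> carrier R"
  shows "I +> x = \<zero>\<^bsub>R Quot I\<^esub> \<longleftrightarrow> x \<in> I"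
proof -
  have "\<zero>\<^bsub>R Quot I\<^esub> = I +> \<zero>" by (simp add: FactRing_def a_rcos_const)
  moreover have "x \<ominus> \<zero> = x" using assms by (simp add: minus_eq)
  ultimately show ?thesis using rcos_eq_iff_minus_mem[OF assms zero_closed] by simp
qed

text \<open>No kernel condition on phi is needed: the hypothesis on g already forces phi to be
  constant on cosets.\<close>
lemma (in ideal) FactRing_ring_hom_induced:
  assumes S: "ring S" and phi: "phi \<in> ring_hom R S"
    and g: "\<And>x. x \<in> carrier R \<Longrightarrow> g (I +> x) = phi x"
  shows "g \<in> ring_hom (R Quot I) S"
proof (rule ring_hom_memI)
  fix X assume "X \<in> carrier (R Quot I)"
  then obtain x where "x \<in> carrier R" "X = I +> x" by (rule FactRing_carrier_obtain)
  then show "g X \<in> carrier S" using g phi ring_hom_closed by fastforce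
next
  fix X Y assume "X \<in> carrier (R Quot I)" "Y \<in> carrier (R Quot I)"
  then obtain x y where x: "x \<in> carrier R" "X = I +> x" and y: "y \<in> carrier R" "Y = I +> y"
    by (metis FactRing_carrier_obtain)
  have "X \<otimes>\<^bsub>R Quot I\<^esub> Y = I +> (x \<otimes> y)" "X \<oplus>\<^bsub>R Quot I\<^esub> Y = I +> (x \<oplus> y)"
    using ring_hom_mult[OF rcos_ring_hom x(1) y(1)] ring_hom_add[OF rcos_ring_hom x(1) y(1)] x y
    by simp_all
  then show "g (X \<otimes>\<^bsub>R Quot I\<^esub> Y) = g X \<otimes>\<^bsub>S\<^esub> g Y" "g (X \<oplus>\<^bsub>R Quot I\<^esub> Y) = g X \<oplus>\<^bsub>S\<^esub> g Y"
    using g x y phi by (simp_all add: ring_hom_mult ring_hom_add)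
next
  show "g \<one>\<^bsub>R Quot I\<^esub> = \<one>\<^bsub>S\<^esub>"
    using g phi by (simp add: FactRing_def ring_hom_one)
qed

lemma (in ring) mem_genideal_central_singleton:
  assumes t: "t \<in> carrier R" and central: "\<And>x. x \<in> carrier R \<Longrightarrow> t \<otimes> x = x \<otimes> t"
    and x: "x \<in> Idl {t}"
  obtains d where "d \<in> carrier R" "x = t \<otimes> d"
proof -
  define P where "P = (\<lambda>d. t \<otimes> d) ` carrier R"
  have "ideal P R"
  proof (rule idealI[OF ring_axioms])
    show "subgroup P (add_monoid R)"
    proof (rule add.subgroupI)
      show "P \<subseteq> carrier R" "P \<noteq> {}" using t by (auto simp: P_def)
    next
      fix y assume "y \<in> P"
      then obtain d where "d \<in> carrier R" "y = t \<otimes> d" by (auto simp: P_def)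
      then show "\<ominus> y \<in> P" using t by (auto simp: P_def r_minus intro!: image_eqI[of _ _ "\<ominus> d"])
    next
      fix y z assume "y \<in> P" "z \<in> P"
      then obtain d e where "d \<in> carrier R" "y = t \<otimes> d" "e \<in> carrier R" "z = t \<otimes> e"
        by (auto simp: P_def)
      then show "y \<oplus> z \<in> P" using t by (auto simp: P_def r_distr intro!: image_eqI[of _ _ "d \<oplus> e"])
    qed
  next
    fix y z assume "y \<in> P" "z \<in> carrier R"
    then obtain d where d: "d \<in> carrier R" "y = t \<otimes> d" by (auto simp: P_def)
    have "z \<otimes> y = t \<otimes> (z \<otimes> d)"
      using d t \<open>z \<in> carrier R\<close> central[of z] by (simp add: m_assoc[symmetric])
    then show "z \<otimes> y \<in> P" using d \<open>z \<in> carrier R\<close> by (auto simp: P_def)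
    have "y \<otimes> z = t \<otimes> (d \<otimes> z)"
      using d t \<open>z \<in> carrier R\<close> by (simp add: m_assoc)
    then show "y \<otimes> z \<in> P" using d \<open>z \<in> carrier R\<close> by (auto simp: P_def)
  qed
  moreover have "t \<in> P"
    using t by (auto simp: P_def intro!: image_eqI[of _ _ \<one>])
  ultimately have "Idl {t} \<subseteq> P" by (simp add: genideal_minimal)
  then show ?thesis using x that by (auto simp: P_def)
qed

lemma (in ring) commutator_correction:
  assumes carr: "a \<in> carrier R" "a' \<in> carrier R" "b \<in> carrier R" "c \<in> carrier R" "d \<in> carrier R"
      "t \<in> carrier R"
    and tb: "t \<otimes> b = b \<otimes> t"
    and a': "a' \<ominus> a = t \<otimes> d"
    and c: "t \<otimes> c = a' \<otimes> b \<ominus> b \<otimes> a'"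
  shows "t \<otimes> (c \<ominus> (d \<otimes> b \<ominus> b \<otimes> d)) = a \<otimes> b \<ominus> b \<otimes> a"
proof -
  have "a \<oplus> (a' \<ominus> a) = a'" using carr by algebra
  then have a'_eq: "a' = a \<oplus> t \<otimes> d" using a' by simp
  have "t \<otimes> (c \<ominus> (d \<otimes> b \<ominus> b \<otimes> d)) = t \<otimes> c \<ominus> ((t \<otimes> d) \<otimes> b \<ominus> (b \<otimes> t) \<otimes> d)"
    using carr by (simp add: r_minus r_distr a_minus_def m_assoc tb[symmetric])
  also have "\<dots> = (a \<oplus> t \<otimes> d) \<otimes> b \<ominus> b \<otimes> (a \<oplus> t \<otimes> d) \<ominus> ((t \<otimes> d) \<otimes> b \<ominus> (b \<otimes> t) \<otimes> d)"
    using c a'_eq by simp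
  also have "\<dots> = a \<otimes> b \<ominus> b \<otimes> a" using carr by algebra
  finally show ?thesis .
qed

lemma is_basis_unique_coeffs:
  assumes "is_basis R sc S J xi" "x \<in> carrier R"
  shows "\<exists>!c. c \<in> J \<rightarrow>\<^sub>E S \<and> finite {i\<in>J. c i \<noteq> 0} \<and>
      x = finsum R (\<lambda>i. sc (c i) \<otimes>\<^bsub>R\<^esub> xi i) {i\<in>J. c i \<noteq> 0}"
  by (rule bspec[OF conjunct2[OF assms(1)[unfolded is_basis_def]] assms(2)])

lemma is_basis_expansion:
  assumes "is_basis R sc S J xi" "x \<in> carrier R"
  obtains c where "c \<in> J \<rightarrow>\<^sub>E S" "finite {i\<in>J. c i \<noteq> 0}"
    "x = finsum R (\<lambda>i. sc (c i) \<otimes>\<^bsub>R\<^esub> xi i) {i\<in>J. c i \<noteq> 0}"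
  using is_basis_unique_coeffs[OF assms] that by blast

lemma is_basis_independent:
  fixes R (structure) and sc :: "'c::zero \<Rightarrow> 'a" and xi :: "'i \<Rightarrow> 'a"
  assumes "ring R" and basis: "is_basis R sc S J xi"
    and S: "0 \<in> S" "sc \<in> S \<rightarrow> carrier R" and sc0: "sc 0 = \<zero>\<^bsub>R\<^esub>"
    and T: "finite T" "T \<subseteq> J" and c: "c \<in> T \<rightarrow> S"
    and zero: "finsum R (\<lambda>i. sc (c i) \<otimes>\<^bsub>R\<^esub> xi i) T = \<zero>\<^bsub>R\<^esub>"
    and i: "i \<in> T"
  shows "c i = 0"
proof -
  interpret ring R by fact
  have xi: "xi j \<in> carrier R" if "j \<in> J" for j
    using basis that unfolding is_basis_def by blast
  define c' where "c' = (\<lambda>j\<in>J. if j \<in> T then c j else 0)"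
  define c0 :: "'i \<Rightarrow> 'c" where "c0 = (\<lambda>j\<in>J. 0)"
  let ?rep = "\<lambda>c. c \<in> J \<rightarrow>\<^sub>E S \<and> finite {j\<in>J. c j \<noteq> 0} \<and>
      \<zero> = finsum R (\<lambda>j. sc (c j) \<otimes> xi j) {j\<in>J. c j \<noteq> 0}"
  have supp: "{j\<in>J. c' j \<noteq> 0} \<subseteq> T" by (auto simp: c'_def)
  have "finsum R (\<lambda>j. sc (c' j) \<otimes> xi j) {j\<in>J. c' j \<noteq> 0} = finsum R (\<lambda>j. sc (c j) \<otimes> xi j) T"
    using T c S xi sc0 supp
    by (intro add.finprod_mono_neutral_cong_left) (auto simp: c'_def Pi_def)
  then have "?rep c'"
    using T(1) supp c S zero by (auto simp: c'_def intro: finite_subset)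
  moreover have "?rep c0" using S by (simp add: c0_def)
  moreover have "\<exists>!c. ?rep c"
    using is_basis_unique_coeffs[OF basis zero_closed] .
  ultimately have "c' = c0" by (metis (no_types, lifting) ex1E)
  then show ?thesis using i T(2) by (auto simp: c'_def c0_def fun_eq_iff split: if_splits)
qed

lemma image_comp_inv_into_Int_image:
  assumes "inj_on g A"
  shows "(f \<circ> inv_into A g) ` (I \<inter> g ` A) = f ` {a\<in>A. g a \<in> I}"
  using assms by (force simp: inv_into_f_f)

subsection \<open>The algebra A and its specialisations\<close>

locale deformation =
  fixes K :: "complex set" and F :: "ratfun set" and n :: nat and R :: "(nat list \<Rightarrow> ratfun) set"
  assumes F_ring: "is_subring_set F" and F_lower: "laurent_polys \<subseteq> F"
    and F_upper: "F \<subseteq> admissible K"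
    and R_sub: "R \<subseteq> carrier (free_alg F n)" and K_sub: "K \<subseteq> - {0, 1}"
begin

abbreviation "FA \<equiv> free_alg F n"
abbreviation "CA \<equiv> free_alg (UNIV :: complex set) n"
abbreviation "A \<equiv> algA F n R"

lemma subring_set_F: "subring_set F"
  using F_ring by (simp add: is_subring_set_iff)

lemma FA_ring: "ring FA"
  using subring_set_F by (rule free_alg_ring)

lemma CA_ring: "ring CA"
  using subring_set_UNIV by (rule free_alg_ring)

lemma relI_ideal: "ideal (relI F n R) FA"
  unfolding relI_def using ring.genideal_ideal[OF FA_ring R_sub] .

lemma algA_ring: "ring A"
  unfolding algA_def using ideal.quotient_is_ring[OF relI_ideal] .

lemma evalw_ring_hom_F: "l \<in> K \<Longrightarrow> evalw l \<in> ring_hom FA CA"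
  using F_upper admissible_regular_at by (intro evalw_ring_hom) blast

lemma evalw_relations_closed: "l \<in> K \<Longrightarrow> evalw l ` R \<subseteq> carrier CA"
  using ring_hom_closed[OF evalw_ring_hom_F] R_sub by blast

lemma relIl_ideal: "l \<in> K \<Longrightarrow> ideal (relIl n R l) CA"
  unfolding relIl_def by (rule ring.genideal_ideal[OF CA_ring evalw_relations_closed])

lemma algAl_ring: "l \<in> K \<Longrightarrow> ring (algAl n R l)"
  unfolding algAl_def by (rule ideal.quotient_is_ring[OF relIl_ideal])

lemma evalw_relI:
  assumes l: "l \<in> K" and x: "x \<in> relI F n R"
  shows "evalw l x \<in> relIl n R l"
proof -
  interpret h: ring_hom_ring FA CA "evalw l"
    using evalw_ring_hom_F[OF l] FA_ring CA_ring by (simp add: ring_hom_ringI2)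
  have "ideal {r \<in> carrier FA. evalw l r \<in> relIl n R l} FA"
    by (rule h.ideal_vimage[OF relIl_ideal[OF l]])
  moreover have "R \<subseteq> {r \<in> carrier FA. evalw l r \<in> relIl n R l}"
    using R_sub ring.genideal_self[OF CA_ring evalw_relations_closed[OF l]]
    unfolding relIl_def by blast
  ultimately have "relI F n R \<subseteq> {r \<in> carrier FA. evalw l r \<in> relIl n R l}"
    unfolding relI_def by (rule ring.genideal_minimal[OF FA_ring])
  then show ?thesis using x by blast
qed

text \<open>gammal is defined through an arbitrary representative; all representatives give the
  same coset because evaluation maps the relation ideal of A into that of A_l.\<close>
lemma gammal_rcos:
  assumes l: "l \<in> K" and x: "x \<in> carrier FA"
  shows "gammal n R l (relI F n R +>\<^bsub>FA\<^esub> x) = relIl n R l +>\<^bsub>CA\<^esub> evalw l x"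
proof -
  interpret I: ideal "relI F n R" FA by (rule relI_ideal)
  interpret Il: ideal "relIl n R l" CA by (rule relIl_ideal[OF l])
  interpret h: ring_hom_ring FA CA "evalw l"
    using evalw_ring_hom_F[OF l] FA_ring CA_ring by (simp add: ring_hom_ringI2)
  define f where "f = (SOME f. f \<in> relI F n R +>\<^bsub>FA\<^esub> x)"
  have "f \<in> relI F n R +>\<^bsub>FA\<^esub> x"
    unfolding f_def using I.a_rcos_self[OF x] by (rule someI[where P = "\<lambda>f. f \<in> relI F n R +>\<^bsub>FA\<^esub> x"])
  then have f: "f \<in> carrier FA" "f \<ominus>\<^bsub>FA\<^esub> x \<in> relI F n R"
    using I.a_elemrcos_carrier I.a_rcos_module_minus[OF FA_ring x] x by blast+
  then have "evalw l (f \<ominus>\<^bsub>FA\<^esub> x) \<in> relIl n R l"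
    by (intro evalw_relI[OF l])
  then have "evalw l f \<ominus>\<^bsub>CA\<^esub> evalw l x \<in> relIl n R l"
    using f(1) x by (simp add: a_minus_def)
  then show ?thesis
    unfolding gammal_def f_def[symmetric] using Il.rcos_eq_iff_minus_mem f(1) x by simp
qed

lemma gammal_ring_hom:
  assumes l: "l \<in> K"
  shows "gammal n R l \<in> ring_hom A (algAl n R l)"
proof -
  have "(\<lambda>x. relIl n R l +>\<^bsub>CA\<^esub> evalw l x) \<in> ring_hom FA (algAl n R l)"
    using ring_hom_trans[OF evalw_ring_hom_F[OF l] ideal.rcos_ring_hom[OF relIl_ideal[OF l]]]
    unfolding algAl_def by (simp add: comp_def)
  then show ?thesis
    unfolding algA_def
    by (rule ideal.FactRing_ring_hom_induced[OF relI_ideal algAl_ring[OF l]]) (rule gammal_rcos[OF l])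
qed

lemma scalA_closed: "c \<in> F \<Longrightarrow> scalA F n R c \<in> carrier A"
  unfolding scalA_def algA_def by (simp add: rcos_mem_FactRing_carrier scal_closed subring_set_F)

lemma gammal_scalA: "l \<in> K \<Longrightarrow> c \<in> F \<Longrightarrow> gammal n R l (scalA F n R c) = scalAl n R l (evalF l c)"
  unfolding scalA_def scalAl_def by (simp add: gammal_rcos scal_closed subring_set_F evalw_scal)

lemma scalAl_mult:
  assumes l: "l \<in> K"
  shows "scalAl n R l a \<otimes>\<^bsub>algAl n R l\<^esub> scalAl n R l b = scalAl n R l (a * b)"
  using ring_hom_mult[OF ideal.rcos_ring_hom[OF relIl_ideal[OF l]], of "scal a" "scal b"]
  unfolding scalAl_def algAl_def by (simp add: scal_closed subring_set_UNIV scal_mult)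

lemma scalAl_one: "l \<in> K \<Longrightarrow> scalAl n R l 1 = \<one>\<^bsub>algAl n R l\<^esub>"
  unfolding scalAl_def algAl_def by (simp add: FactRing_def scal_one[of UNIV n])

lemma scalAl_zero: "l \<in> K \<Longrightarrow> scalAl n R l 0 = \<zero>\<^bsub>algAl n R l\<^esub>"
  unfolding scalAl_def algAl_def scal_zero[of UNIV n]
  by (rule ring_hom_zero[OF ideal.rcos_ring_hom CA_ring ideal.quotient_is_ring]; rule relIl_ideal)

lemma scalAl_closed: "l \<in> K \<Longrightarrow> scalAl n R l a \<in> carrier (algAl n R l)"
  unfolding scalAl_def algAl_def by (simp add: rcos_mem_FactRing_carrier scal_closed subring_set_UNIV)

lemma t_minus_1_in_F: "Fract [:-1, 1:] 1 \<in> F"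
proof -
  have "Fract [:-1, 1:] 1 \<in> laurent_polys"
    unfolding laurent_polys_def by (rule CollectI, rule exI[of _ "[:-1, 1:]"], rule exI[of _ 0]) simp
  then show ?thesis using F_lower by blast
qed

lemma tm1_closed: "tm1 F n R \<in> carrier A"
  unfolding tm1_def by (rule scalA_closed[OF t_minus_1_in_F])

lemma gammal_tm1: "l \<in> K \<Longrightarrow> gammal n R l (tm1 F n R) = scalAl n R l (l - 1)"
  unfolding tm1_def using gammal_scalA[OF _ t_minus_1_in_F] evalF_const[of l "[:-1, 1:]"] by simp

lemma scalA_central:
  assumes c: "c \<in> F" and X: "X \<in> carrier A"
  shows "scalA F n R c \<otimes>\<^bsub>A\<^esub> X = X \<otimes>\<^bsub>A\<^esub> scalA F n R c"
proof -
  obtain x where x: "x \<in> carrier FA" "X = relI F n R +>\<^bsub>FA\<^esub> x"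
    using X unfolding algA_def by (rule FactRing_carrier_obtain)
  have h: "(+>\<^bsub>FA\<^esub>) (relI F n R) \<in> ring_hom FA A"
    unfolding algA_def by (rule ideal.rcos_ring_hom[OF relI_ideal])
  show ?thesis
    unfolding scalA_def x(2) using c x(1) scal_closed[OF subring_set_F c]
    by (simp add: ring_hom_mult[OF h, symmetric] scal_central)
qed

lemma tm1_central: "X \<in> carrier A \<Longrightarrow> tm1 F n R \<otimes>\<^bsub>A\<^esub> X = X \<otimes>\<^bsub>A\<^esub> tm1 F n R"
  unfolding tm1_def by (rule scalA_central[OF t_minus_1_in_F])

lemma tI_ideal: "ideal (tI F n R) A"
  unfolding tI_def by (rule ring.genideal_ideal[OF algA_ring]) (simp add: tm1_closed)

lemma algA1_ring: "ring (algA1 F n R)"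
  unfolding algA1_def by (rule ideal.quotient_is_ring[OF tI_ideal])

lemma gamma1_ring_hom: "gamma1 F n R \<in> ring_hom A (algA1 F n R)"
  unfolding gamma1_def algA1_def by (rule ideal.rcos_ring_hom[OF tI_ideal])

lemma tI_obtain:
  assumes "x \<in> tI F n R"
  obtains d where "d \<in> carrier A" "x = tm1 F n R \<otimes>\<^bsub>A\<^esub> d"
  using ring.mem_genideal_central_singleton[OF algA_ring tm1_closed tm1_central] assms
  unfolding tI_def by blast

lemma gamma1_eq_iff:
  "a \<in> carrier A \<Longrightarrow> b \<in> carrier A \<Longrightarrow> gamma1 F n R a = gamma1 F n R b \<longleftrightarrow> a \<ominus>\<^bsub>A\<^esub> b \<in> tI F n R"
  unfolding gamma1_def by (rule ideal.rcos_eq_iff_minus_mem[OF tI_ideal])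

end

subsection \<open>Injectivity of gammahat\<close>

locale deformation_with_basis = deformation K F n R for K F n R +
  fixes J :: "'i set" and xi :: "'i \<Rightarrow> (nat list \<Rightarrow> ratfun) set"
  assumes K_inf: "infinite K"
    and basis_A: "is_basis (algA F n R) (scalA F n R) F J xi"
    and basis_Al: "\<forall>l\<in>K. is_basis (algAl n R l) (scalAl n R l) UNIV J (\<lambda>i. gammal n R l (xi i))"
begin

lemma xi_closed: "i \<in> J \<Longrightarrow> xi i \<in> carrier A"
  using basis_A unfolding is_basis_def by (blast dest: conjunct1)

lemma gammal_basis_sum:
  assumes l: "l \<in> K" and T: "T \<subseteq> J" and c: "c \<in> T \<rightarrow> F"
  shows "gammal n R l (finsum A (\<lambda>i. scalA F n R (c i) \<otimes>\<^bsub>A\<^esub> xi i) T)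
       = finsum (algAl n R l) (\<lambda>i. scalAl n R l (evalF l (c i)) \<otimes>\<^bsub>algAl n R l\<^esub> gammal n R l (xi i)) T"
proof -
  interpret A: ring A by (rule algA_ring)
  interpret Al: ring "algAl n R l" by (rule algAl_ring[OF l])
  interpret h: ring_hom_ring A "algAl n R l" "gammal n R l"
    using gammal_ring_hom[OF l] by (simp add: ring_hom_ringI2 A.ring_axioms Al.ring_axioms)
  have terms: "scalA F n R (c i) \<otimes>\<^bsub>A\<^esub> xi i \<in> carrier A" if "i \<in> T" for i
    using that T c by (auto intro: scalA_closed xi_closed)
  have "gammal n R l (finsum A (\<lambda>i. scalA F n R (c i) \<otimes>\<^bsub>A\<^esub> xi i) T)
      = finsum (algAl n R l) (gammal n R l \<circ> (\<lambda>i. scalA F n R (c i) \<otimes>\<^bsub>A\<^esub> xi i)) T"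
    using terms by (intro h.hom_finsum) blast
  also have "\<dots> = finsum (algAl n R l)
      (\<lambda>i. scalAl n R l (evalF l (c i)) \<otimes>\<^bsub>algAl n R l\<^esub> gammal n R l (xi i)) T"
  proof (rule Al.finsum_cong'[OF refl])
    show "(\<lambda>i. scalAl n R l (evalF l (c i)) \<otimes>\<^bsub>algAl n R l\<^esub> gammal n R l (xi i)) \<in> T \<rightarrow> carrier (algAl n R l)"
      using T by (auto intro!: scalAl_closed[OF l] h.hom_closed xi_closed)
    fix i assume "i \<in> T"
    then show "(gammal n R l \<circ> (\<lambda>i. scalA F n R (c i) \<otimes>\<^bsub>A\<^esub> xi i)) i
        = scalAl n R l (evalF l (c i)) \<otimes>\<^bsub>algAl n R l\<^esub> gammal n R l (xi i)"
      using T c ring_hom_mult[OF gammal_ring_hom[OF l] scalA_closed xi_closed]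
      by (simp add: subset_iff Pi_def gammal_scalA[OF l])
  qed
  finally show ?thesis .
qed

lemma eq_zero_if_gammal_eq_zero:
  assumes a: "a \<in> carrier A" and zero: "\<And>l. l \<in> K \<Longrightarrow> gammal n R l a = \<zero>\<^bsub>algAl n R l\<^esub>"
  shows "a = \<zero>\<^bsub>A\<^esub>"
proof -
  interpret A: ring A by (rule algA_ring)
  obtain c where c: "c \<in> J \<rightarrow>\<^sub>E F" "finite {i\<in>J. c i \<noteq> 0}"
    and a_eq: "a = finsum A (\<lambda>i. scalA F n R (c i) \<otimes>\<^bsub>A\<^esub> xi i) {i\<in>J. c i \<noteq> 0}"
    using basis_A a by (rule is_basis_expansion)
  define T where "T = {i\<in>J. c i \<noteq> 0}"
  have a_T: "a = finsum A (\<lambda>i. scalA F n R (c i) \<otimes>\<^bsub>A\<^esub> xi i) T"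
    using a_eq by (simp add: T_def)
  have cT: "c \<in> T \<rightarrow> F" using c(1) by (auto simp: T_def)
  have eval_zero: "evalF l (c i) = 0" if l: "l \<in> K" and i: "i \<in> T" for l i
  proof (rule is_basis_independent[OF algAl_ring[OF l] basis_Al[rule_format, OF l]])
    show "finsum (algAl n R l) (\<lambda>i. scalAl n R l (evalF l (c i)) \<otimes>\<^bsub>algAl n R l\<^esub> gammal n R l (xi i)) T
        = \<zero>\<^bsub>algAl n R l\<^esub>"
      using gammal_basis_sum[OF l _ cT] zero[OF l] a_T by (simp add: T_def)
  qed (use c(2) i in \<open>auto simp: T_def scalAl_zero[OF l] scalAl_closed[OF l]\<close>)
  have "c i = 0" if i: "i \<in> T" for i
  proof (rule admissible_eq_0_if_evalF_eq_0[OF K_inf])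
    show "c i \<in> admissible K" using i cT F_upper by blast
  qed (rule eval_zero[OF _ i])
  then have "T = {}" by (auto simp: T_def)
  then show ?thesis using a_T by simp
qed

lemma gammahat_ring_hom: "gammahat K n R \<in> ring_hom A (Ahat K n R)"
proof (rule ring_hom_memI)
  fix x assume "x \<in> carrier A"
  then show "gammahat K n R x \<in> carrier (Ahat K n R)"
    using ring_hom_closed[OF gammal_ring_hom] by (auto simp: Ahat_def prod_ring_def gammahat_def)
next
  fix x y assume "x \<in> carrier A" "y \<in> carrier A"
  then show "gammahat K n R (x \<otimes>\<^bsub>A\<^esub> y) = gammahat K n R x \<otimes>\<^bsub>Ahat K n R\<^esub> gammahat K n R y"
    "gammahat K n R (x \<oplus>\<^bsub>A\<^esub> y) = gammahat K n R x \<oplus>\<^bsub>Ahat K n R\<^esub> gammahat K n R y"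
    using ring_hom_mult[OF gammal_ring_hom] ring_hom_add[OF gammal_ring_hom]
    by (auto simp: Ahat_def prod_ring_def gammahat_def fun_eq_iff)
next
  show "gammahat K n R \<one>\<^bsub>A\<^esub> = \<one>\<^bsub>Ahat K n R\<^esub>"
    using ring_hom_one[OF gammal_ring_hom] by (auto simp: Ahat_def prod_ring_def gammahat_def fun_eq_iff)
qed

lemma gammahat_inj: "inj_on (gammahat K n R) (carrier A)"
proof (rule inj_onI)
  interpret A: ring A by (rule algA_ring)
  fix a b assume a: "a \<in> carrier A" and b: "b \<in> carrier A"
    and eq: "gammahat K n R a = gammahat K n R b"
  have "gammal n R l (a \<ominus>\<^bsub>A\<^esub> b) = \<zero>\<^bsub>algAl n R l\<^esub>" if l: "l \<in> K" for l
  proof -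
    interpret Al: ring "algAl n R l" by (rule algAl_ring[OF l])
    interpret h: ring_hom_ring A "algAl n R l" "gammal n R l"
      using gammal_ring_hom[OF l] by (simp add: ring_hom_ringI2 A.ring_axioms Al.ring_axioms)
    have "gammal n R l a = gammal n R l b"
      using fun_cong[OF eq, of l] l by (simp add: gammahat_def)
    then show ?thesis using a b by (simp add: a_minus_def Al.r_neg)
  qed
  then have "a \<ominus>\<^bsub>A\<^esub> b = \<zero>\<^bsub>A\<^esub>" using a b by (intro eq_zero_if_gammal_eq_zero) auto
  moreover have "a = (a \<ominus>\<^bsub>A\<^esub> b) \<oplus>\<^bsub>A\<^esub> b" using a b by algebra
  ultimately show "a = b" using b by simp
qed

text \<open>Since 1 \<notin> K, the image of t - 1 is invertible in Ahat, with inverse (1/(l - 1))_l.\<close>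
lemma gammahat_cancel_tm1:
  assumes I: "ideal I (Ahat K n R)" and u: "u \<in> carrier A"
    and tu: "gammahat K n R (tm1 F n R \<otimes>\<^bsub>A\<^esub> u) \<in> I"
  shows "gammahat K n R u \<in> I"
proof -
  define s where "s = (\<lambda>l\<in>K. scalAl n R l (1 / (l - 1)))"
  have s: "s \<in> carrier (Ahat K n R)"
    unfolding s_def Ahat_def prod_ring_def using scalAl_closed by auto
  have "gammal n R l u = scalAl n R l (1 / (l - 1)) \<otimes>\<^bsub>algAl n R l\<^esub> gammal n R l (tm1 F n R \<otimes>\<^bsub>A\<^esub> u)"
    if l: "l \<in> K" for l
  proof -
    interpret Al: ring "algAl n R l" by (rule algAl_ring[OF l])
    have l1: "l \<noteq> 1" using l K_sub by auto
    have gu: "gammal n R l u \<in> carrier (algAl n R l)"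
      using ring_hom_closed[OF gammal_ring_hom[OF l] u] .
    have "scalAl n R l (1 / (l - 1)) \<otimes>\<^bsub>algAl n R l\<^esub> gammal n R l (tm1 F n R \<otimes>\<^bsub>A\<^esub> u)
        = (scalAl n R l (1 / (l - 1)) \<otimes>\<^bsub>algAl n R l\<^esub> scalAl n R l (l - 1)) \<otimes>\<^bsub>algAl n R l\<^esub> gammal n R l u"
      using ring_hom_mult[OF gammal_ring_hom[OF l] tm1_closed u] scalAl_closed[OF l] gu
      by (simp add: gammal_tm1[OF l] Al.m_assoc)
    also have "\<dots> = gammal n R l u"
      using l1 gu by (simp add: scalAl_mult[OF l] scalAl_one[OF l])
    finally show ?thesis by simp
  qed
  then have "gammahat K n R u = s \<otimes>\<^bsub>Ahat K n R\<^esub> gammahat K n R (tm1 F n R \<otimes>\<^bsub>A\<^esub> u)"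
    unfolding s_def Ahat_def prod_ring_def gammahat_def by (auto simp: fun_eq_iff)
  then show ?thesis using ideal.I_l_closed[OF I tu s] by simp
qed

end

subsection \<open>Poisson ideals of A_1\<close>

context deformation
begin

lemma gamma1_commutator_eq_zero:
  assumes A1_comm: "\<forall>x\<in>carrier (algA1 F n R). \<forall>y\<in>carrier (algA1 F n R).
      x \<otimes>\<^bsub>algA1 F n R\<^esub> y = y \<otimes>\<^bsub>algA1 F n R\<^esub> x"
    and a: "a \<in> carrier A" and b: "b \<in> carrier A"
  shows "gamma1 F n R (a \<otimes>\<^bsub>A\<^esub> b \<ominus>\<^bsub>A\<^esub> b \<otimes>\<^bsub>A\<^esub> a) = \<zero>\<^bsub>algA1 F n R\<^esub>"
proof -
  interpret A1: ring "algA1 F n R" by (rule algA1_ring)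
  interpret g: ring_hom_ring A "algA1 F n R" "gamma1 F n R"
    using gamma1_ring_hom algA_ring algA1_ring by (simp add: ring_hom_ringI2)
  show ?thesis
    using a b A1_comm by (simp add: a_minus_def A1.r_neg)
qed

lemma pbracket_witness:
  assumes A1_comm: "\<forall>x\<in>carrier (algA1 F n R). \<forall>y\<in>carrier (algA1 F n R).
      x \<otimes>\<^bsub>algA1 F n R\<^esub> y = y \<otimes>\<^bsub>algA1 F n R\<^esub> x"
    and X: "X \<in> carrier (algA1 F n R)" and Y: "Y \<in> carrier (algA1 F n R)"
  obtains a b c where "a \<in> carrier A" "b \<in> carrier A" "c \<in> carrier A"
    "gamma1 F n R a = X" "gamma1 F n R b = Y"
    "tm1 F n R \<otimes>\<^bsub>A\<^esub> c = a \<otimes>\<^bsub>A\<^esub> b \<ominus>\<^bsub>A\<^esub> b \<otimes>\<^bsub>A\<^esub> a"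
    "pbracket F n R X Y = gamma1 F n R c"
proof -
  interpret A: ring A by (rule algA_ring)
  interpret T: ideal "tI F n R" A by (rule tI_ideal)
  obtain a where a: "a \<in> carrier A" "X = tI F n R +>\<^bsub>A\<^esub> a"
    using X unfolding algA1_def by (rule FactRing_carrier_obtain)
  obtain b where b: "b \<in> carrier A" "Y = tI F n R +>\<^bsub>A\<^esub> b"
    using Y unfolding algA1_def by (rule FactRing_carrier_obtain)
  have "a \<otimes>\<^bsub>A\<^esub> b \<ominus>\<^bsub>A\<^esub> b \<otimes>\<^bsub>A\<^esub> a \<in> tI F n R"
    using gamma1_commutator_eq_zero[OF A1_comm a(1) b(1)] T.rcos_eq_zero_iff a(1) b(1)
    unfolding gamma1_def algA1_def by simp
  then obtain c where c: "c \<in> carrier A" "a \<otimes>\<^bsub>A\<^esub> b \<ominus>\<^bsub>A\<^esub> b \<otimes>\<^bsub>A\<^esub> a = tm1 F n R \<otimes>\<^bsub>A\<^esub> c"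
    by (rule tI_obtain)
  define Q where "Q z \<longleftrightarrow> (\<exists>a b c. a \<in> carrier A \<and> b \<in> carrier A \<and> c \<in> carrier A
      \<and> gamma1 F n R a = X \<and> gamma1 F n R b = Y
      \<and> tm1 F n R \<otimes>\<^bsub>A\<^esub> c = a \<otimes>\<^bsub>A\<^esub> b \<ominus>\<^bsub>A\<^esub> b \<otimes>\<^bsub>A\<^esub> a
      \<and> z = gamma1 F n R c)" for z
  have "Q (gamma1 F n R c)"
    unfolding Q_def gamma1_def using a b c by auto
  then have "Q (pbracket F n R X Y)"
    unfolding pbracket_def Q_def[symmetric] by (rule someI)
  then show ?thesis using that unfolding Q_def by blast
qed

lemma pbracket_mem_image:
  assumes A1_comm: "\<forall>x\<in>carrier (algA1 F n R). \<forall>y\<in>carrier (algA1 F n R).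
      x \<otimes>\<^bsub>algA1 F n R\<^esub> y = y \<otimes>\<^bsub>algA1 F n R\<^esub> x"
    and P: "ideal P A" and divisible: "\<And>u. u \<in> carrier A \<Longrightarrow> tm1 F n R \<otimes>\<^bsub>A\<^esub> u \<in> P \<Longrightarrow> u \<in> P"
    and a: "a \<in> P" and Y: "Y \<in> carrier (algA1 F n R)"
  shows "pbracket F n R (gamma1 F n R a) Y \<in> gamma1 F n R ` P"
proof -
  interpret A: ring A by (rule algA_ring)
  interpret P: ideal P A by (rule P)
  interpret A1: ring "algA1 F n R" by (rule algA1_ring)
  have aA: "a \<in> carrier A" using a by (rule P.a_Hcarr)
  have "gamma1 F n R a \<in> carrier (algA1 F n R)"
    using ring_hom_closed[OF gamma1_ring_hom aA] .
  then obtain a' b c where a': "a' \<in> carrier A" and b: "b \<in> carrier A" and c: "c \<in> carrier A"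
    and ga': "gamma1 F n R a' = gamma1 F n R a" and "gamma1 F n R b = Y"
    and tc: "tm1 F n R \<otimes>\<^bsub>A\<^esub> c = a' \<otimes>\<^bsub>A\<^esub> b \<ominus>\<^bsub>A\<^esub> b \<otimes>\<^bsub>A\<^esub> a'"
    and bracket: "pbracket F n R (gamma1 F n R a) Y = gamma1 F n R c"
    by (rule pbracket_witness[OF A1_comm _ Y])
  have "a' \<ominus>\<^bsub>A\<^esub> a \<in> tI F n R"
    using ga' gamma1_eq_iff[OF a' aA] by simp
  then obtain d where d: "d \<in> carrier A" "a' \<ominus>\<^bsub>A\<^esub> a = tm1 F n R \<otimes>\<^bsub>A\<^esub> d"
    by (rule tI_obtain)
  define u where "u = c \<ominus>\<^bsub>A\<^esub> (d \<otimes>\<^bsub>A\<^esub> b \<ominus>\<^bsub>A\<^esub> b \<otimes>\<^bsub>A\<^esub> d)"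
  have db: "d \<otimes>\<^bsub>A\<^esub> b \<ominus>\<^bsub>A\<^esub> b \<otimes>\<^bsub>A\<^esub> d \<in> carrier A"
    using b d(1) by simp
  have u: "u \<in> carrier A" unfolding u_def using c db by simp
  have "tm1 F n R \<otimes>\<^bsub>A\<^esub> u = a \<otimes>\<^bsub>A\<^esub> b \<ominus>\<^bsub>A\<^esub> b \<otimes>\<^bsub>A\<^esub> a"
    unfolding u_def by (rule A.commutator_correction[OF aA a' b c d(1) tm1_closed tm1_central[OF b] d(2) tc])
  also have "\<dots> \<in> P"
    using a b unfolding a_minus_def by (intro P.a_closed P.a_inv_closed P.I_r_closed P.I_l_closed)
  finally have "u \<in> P" using divisible u by blast
  moreover have "gamma1 F n R c = gamma1 F n R u"
  proof -
    have "c = u \<oplus>\<^bsub>A\<^esub> (d \<otimes>\<^bsub>A\<^esub> b \<ominus>\<^bsub>A\<^esub> b \<otimes>\<^bsub>A\<^esub> d)"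
      unfolding u_def using c db by algebra
    then show ?thesis
      using ring_hom_add[OF gamma1_ring_hom u db] ring_hom_closed[OF gamma1_ring_hom u]
        gamma1_commutator_eq_zero[OF A1_comm d(1) b] by simp
  qed
  ultimately show ?thesis using bracket by blast
qed

lemma poisson_ideal_image:
  assumes A1_comm: "\<forall>x\<in>carrier (algA1 F n R). \<forall>y\<in>carrier (algA1 F n R).
      x \<otimes>\<^bsub>algA1 F n R\<^esub> y = y \<otimes>\<^bsub>algA1 F n R\<^esub> x"
    and P: "ideal P A" and divisible: "\<And>u. u \<in> carrier A \<Longrightarrow> tm1 F n R \<otimes>\<^bsub>A\<^esub> u \<in> P \<Longrightarrow> u \<in> P"
  shows "poisson_ideal F n R (gamma1 F n R ` P)"
proof -
  have "gamma1 F n R = (+>\<^bsub>A\<^esub>) (tI F n R)" by (simp add: gamma1_def fun_eq_iff)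
  then have "ideal (gamma1 F n R ` P) (algA1 F n R)"
    unfolding algA1_def using ring.ring_ideal_imp_quot_ideal[OF algA_ring tI_ideal P] by simp
  then show ?thesis
    unfolding poisson_ideal_def using pbracket_mem_image[OF A1_comm P divisible] by blast
qed

end

theorem theorem1p4:
  fixes K :: "complex set" and F :: "ratfun set" and n :: nat
    and R :: "(nat list \<Rightarrow> ratfun) set"
    and J :: "'i set" and xi :: "'i \<Rightarrow> (nat list \<Rightarrow> ratfun) set"
  assumes K_inf: "infinite K" and K_sub: "K \<subseteq> - {0, 1}"
    and F_ring: "is_subring_set F"
    and F_lower: "laurent_polys \<subseteq> F"
    and F_upper: "F \<subseteq> admissible K"
    and R_fin: "finite R"
    and R_sub: "R \<subseteq> carrier (free_alg F n)"
    and t_nonzero: "tm1 F n R \<noteq> \<zero>\<^bsub>algA F n R\<^esub>"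
    and t_nonunit: "tm1 F n R \<notin> Units (algA F n R)"
    and t_nzd: "\<forall>a\<in>carrier (algA F n R).
                  (tm1 F n R \<otimes>\<^bsub>algA F n R\<^esub> a = \<zero>\<^bsub>algA F n R\<^esub>
                   \<or> a \<otimes>\<^bsub>algA F n R\<^esub> tm1 F n R = \<zero>\<^bsub>algA F n R\<^esub>)
                  \<longrightarrow> a = \<zero>\<^bsub>algA F n R\<^esub>"
    and A1_comm: "\<forall>x\<in>carrier (algA1 F n R). \<forall>y\<in>carrier (algA1 F n R).
                    x \<otimes>\<^bsub>algA1 F n R\<^esub> y = y \<otimes>\<^bsub>algA1 F n R\<^esub> x"
    and basis_A: "is_basis (algA F n R) (scalA F n R) F J xi"
    and basis_A1: "is_basis (algA1 F n R) (\<lambda>c. gamma1 F n R (scalA F n R (Fract [:c:] 1)))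
                      (UNIV :: complex set) J (\<lambda>i. gamma1 F n R (xi i))"
    and basis_Al: "\<forall>l\<in>K. is_basis (algAl n R l) (scalAl n R l) (UNIV :: complex set) J
                      (\<lambda>i. gammal n R l (xi i))"
  shows "inj_on (gammahat K n R) (carrier (algA F n R)) \<and>
         (\<forall>I. ideal I (Ahat K n R) \<longrightarrow>
            poisson_ideal F n R
              ((gamma1 F n R \<circ> inv_into (carrier (algA F n R)) (gammahat K n R))
                 ` (I \<inter> gammahat K n R ` carrier (algA F n R))))"
proof -
  interpret deformation_with_basis K F n R J xi
    by unfold_locales (fact F_ring F_lower F_upper R_sub K_sub K_inf basis_A basis_Al)+
  have "poisson_ideal F n R
      ((gamma1 F n R \<circ> inv_into (carrier A) (gammahat K n R)) ` (I \<inter> gammahat K n R ` carrier A))"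
    if I: "ideal I (Ahat K n R)" for I
  proof -
    interpret Ahat: ring "Ahat K n R" using I by (rule ideal.axioms(2))
    interpret gammahat: ring_hom_ring A "Ahat K n R" "gammahat K n R"
      using gammahat_ring_hom algA_ring Ahat.ring_axioms by (simp add: ring_hom_ringI2)
    have "ideal {a \<in> carrier A. gammahat K n R a \<in> I} A"
      by (rule gammahat.ideal_vimage[OF I])
    then have "poisson_ideal F n R (gamma1 F n R ` {a \<in> carrier A. gammahat K n R a \<in> I})"
      using A1_comm gammahat_cancel_tm1[OF I] tm1_closed
      by (intro poisson_ideal_image) (auto simp: ring_hom_mult)
    then show ?thesis by (simp only: image_comp_inv_into_Int_image[OF gammahat_inj])
  qed
  then show ?thesis using gammahat_inj by blast
qed

end
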